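(* The fraction of algebraic tangle expressions is invariant under the elementary moves, twists, flypes and ring moves; explicitly, for every algebraic tangle expression $A$ (products being left-associative, $2:=101$, $\overline2:=\overline1 0\overline1$): (i) elementary moves: $\mathrm{Frac}(01)=\mathrm{Frac}(00)$ and $\mathrm{Frac}(10\overline1)=\mathrm{Frac}(0)=\mathrm{Frac}(\overline101)$; (ii) twist: $\mathrm{Frac}(10\rho_x(A)0\overline1)=\mathrm{Frac}(A)=\mathrm{Frac}(\overline10\rho_x(A)01)$; (iii) flypes: $\mathrm{Frac}(\overline A\,\overline1\,1\,\overline1)=\mathrm{Frac}(\overline A\,0\,1\,\overline1\,1\,0)=\mathrm{Frac}(A)=\mathrm{Frac}(\overline A\,0\,\overline1\,1\,\overline1\,0)=\mathrm{Frac}(\overline A\,1\,\overline1\,1)$; (iv) ring move: $\mathrm{Frac}\bigl(A0(2(\overline20)0)\bigr)=\mathrm{Frac}\bigl(2(\overline20)A\bigr)$.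
   Context: Algebraic tangle expressions are built from the basic tangles $0,\infty,1,\overline1$ by sums and products $AB:=A0+B$, where $A0$ denotes the reflection of $A$ under $(x,y,z)\mapsto(-y,-x,z)$; products are left-associative ($ABC=(AB)C$). $\overline A$ is the expression obtained from $A$ by swapping every $1$ with $\overline1$ (the mirror image). The fraction is defined recursively by $\mathrm{Frac}(0)=0$, $\mathrm{Frac}(\infty)=\infty$, $\mathrm{Frac}(1)=1$, $\mathrm{Frac}(\overline1)=-1$, $\mathrm{Frac}(LR)=\mathrm{Frac}(R)+1/\mathrm{Frac}(L)$, in $\mathbb{Q}\cup\{\infty\}$ with $1/0=\infty$, $1/\infty=0$, $x+\infty=\infty+x=\infty$, $-\infty=\infty$. The rotation $\rho_x$ (by $\pi$ about the $x$-axis) acts on expressions recursively by $\rho_x(c)=\rho_y(c)=c$ for basic $c$, $\rho_x(LR)=\rho_y(L)\rho_x(R)$, $\rho_y(LR)=(\rho_y(R)0)(\rho_x(L)0)$. *)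

theory Defs
  imports Main "HOL-Library.Extended_Nat" Complex_Main
begin

datatype tangle = TZero | TInf | TOne | TOneBar | TProd tangle tangle

text \<open>Extended rationals Q \<union> {\<infinity>}: None represents \<infinity>.\<close>
type_synonym qinf = "rat option"

fun qplus :: "qinf \<Rightarrow> qinf \<Rightarrow> qinf" where
  "qplus (Some x) (Some y) = Some (x + y)"
| "qplus _ _ = None"

fun qrecip :: "qinf \<Rightarrow> qinf" where
  "qrecip None = Some 0"
| "qrecip (Some x) = (if x = 0 then None else Some (1 / x))"

fun Frac :: "tangle \<Rightarrow> qinf" where
  "Frac TZero = Some 0"
| "Frac TInf = None"
| "Frac TOne = Some 1"
| "Frac TOneBar = Some (-1)"
| "Frac (TProd L R) = qplus (Frac R) (qrecip (Frac L))"

fun mirror :: "tangle \<Rightarrow> tangle" where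
  "mirror TOne = TOneBar"
| "mirror TOneBar = TOne"
| "mirror (TProd L R) = TProd (mirror L) (mirror R)"
| "mirror c = c"

fun rho_x :: "tangle \<Rightarrow> tangle" and rho_y :: "tangle \<Rightarrow> tangle" where
  "rho_x (TProd L R) = TProd (rho_y L) (rho_x R)"
| "rho_x c = c"
| "rho_y (TProd L R) = TProd (TProd (rho_y R) TZero) (TProd (rho_x L) TZero)"
| "rho_y c = c"

abbreviation (input) tp :: "tangle \<Rightarrow> tangle \<Rightarrow> tangle" (infixl "\<cdot>" 70) where
  "tp \<equiv> TProd"

definition two :: tangle where "two = TOne \<cdot> TZero \<cdot> TOne"
definition twobar :: tangle where "twobar = TOneBar \<cdot> TZero \<cdot> TOneBar"

end

theory Submission
  imports Defs
begin

text \<open>Reading a product from the right, \<open>Frac (X \<cdot> c) = Frac c + 1 / Frac X\<close>, so every move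
  is an identity between compositions of the Moebius maps \<open>x \<mapsto> c + 1/x\<close> on \<open>\<rat> \<union> {\<infinity>}\<close>.
  The rotations do not change the fraction, and mirroring negates it. A twist composes
  \<open>x \<mapsto> 1/x\<close> twice, so it only adds and subtracts the fraction of its ends. A flype rests on
  the relation \<open>(x \<mapsto> c + 1/x)\<^sup>3 = (x \<mapsto> -x)\<close> for alternating signs \<open>c = \<plusminus>1\<close>, which turns
  the negation coming from the mirror image back into the identity. The ring \<open>2 (2bar 0)\<close> has
  fraction 0, so both sides of the ring move have fraction \<infinity>.\<close>

fun qneg :: "qinf \<Rightarrow> qinf" where
  "qneg None = None"
| "qneg (Some x) = Some (- x)"

lemma qneg_qneg [simp]: "qneg (qneg x) = x"
  by (cases x) auto

lemma qrecip_qrecip [simp]: "qrecip (qrecip x) = x"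
  by (cases x) auto

lemma qrecip_qneg: "qrecip (qneg x) = qneg (qrecip x)"
  by (cases x) auto

lemma qplus_commute: "qplus a b = qplus b a"
  by (cases a; cases b) auto

lemma qplus_zero_left [simp]: "qplus (Some 0) x = x"
  by (cases x) auto

lemma qplus_None_right [simp]: "qplus x None = None"
  by (cases x) auto

lemma qplus_cancel [simp]: "a + b = 0 \<Longrightarrow> qplus (Some a) (qplus (Some b) x) = x"
  by (cases x) auto

lemma qplus_qrecip_cube:
  assumes "c\<^sup>2 = 1"
  shows "qplus (Some c) (qrecip (qplus (Some (- c)) (qrecip (qplus (Some c) (qrecip x)))))
    = qneg x"
proof -
  have "c = 1 \<or> c = -1"
    using assms by (metis power2_eq_1_iff)
  then show ?thesis
    by (cases x) (auto simp: field_simps)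
qed

lemma Frac_TProd_TZero: "Frac (X \<cdot> TZero) = qrecip (Frac X)"
  by simp

lemma Frac_rho: "Frac (rho_x A) = Frac A" "Frac (rho_y A) = Frac A"
  by (induction A rule: rho_x_rho_y.induct) (simp_all add: qplus_commute)

lemma Frac_mirror: "Frac (mirror A) = qneg (Frac A)"
proof (induction A)
  case (TProd L R)
  then show ?case
    by (cases "Frac L"; cases "Frac R") (auto simp: divide_simps)
qed auto

lemma Frac_twist: "Frac (C \<cdot> TZero \<cdot> B \<cdot> TZero \<cdot> D) = qplus (Frac D) (qplus (Frac C) (Frac B))"
  by (simp add: qplus_commute)

lemma Frac_flype_bar: "Frac (X \<cdot> TOneBar \<cdot> TOne \<cdot> TOneBar) = qneg (Frac X)"
  using qplus_qrecip_cube [of "-1" "Frac X"] by simp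

lemma Frac_flype: "Frac (X \<cdot> TOne \<cdot> TOneBar \<cdot> TOne) = qneg (Frac X)"
  using qplus_qrecip_cube [of 1 "Frac X"] by simp

lemma Frac_TProd_zero_left: "Frac L = Some 0 \<Longrightarrow> Frac (L \<cdot> R) = None"
  by simp

lemma Frac_TProd_infinite_right: "Frac R = None \<Longrightarrow> Frac (L \<cdot> R) = None"
  by simp

lemma Frac_ring: "Frac (two \<cdot> (twobar \<cdot> TZero)) = Some 0"
  by (simp add: two_def twobar_def)

theorem lemma6:
  fixes A :: tangle
  shows "Frac (TZero \<cdot> TOne) = Frac (TZero \<cdot> TZero)
    \<and> Frac (TOne \<cdot> TZero \<cdot> TOneBar) = Frac TZero
    \<and> Frac TZero = Frac (TOneBar \<cdot> TZero \<cdot> TOne)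
    \<and> Frac (TOne \<cdot> TZero \<cdot> rho_x A \<cdot> TZero \<cdot> TOneBar) = Frac A
    \<and> Frac A = Frac (TOneBar \<cdot> TZero \<cdot> rho_x A \<cdot> TZero \<cdot> TOne)
    \<and> Frac (mirror A \<cdot> TOneBar \<cdot> TOne \<cdot> TOneBar)
        = Frac (mirror A \<cdot> TZero \<cdot> TOne \<cdot> TOneBar \<cdot> TOne \<cdot> TZero)
    \<and> Frac (mirror A \<cdot> TZero \<cdot> TOne \<cdot> TOneBar \<cdot> TOne \<cdot> TZero) = Frac A
    \<and> Frac A = Frac (mirror A \<cdot> TZero \<cdot> TOneBar \<cdot> TOne \<cdot> TOneBar \<cdot> TZero)
    \<and> Frac (mirror A \<cdot> TZero \<cdot> TOneBar \<cdot> TOne \<cdot> TOneBar \<cdot> TZero)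
        = Frac (mirror A \<cdot> TOne \<cdot> TOneBar \<cdot> TOne)
    \<and> Frac (A \<cdot> TZero \<cdot> (two \<cdot> (twobar \<cdot> TZero) \<cdot> TZero))
        = Frac (two \<cdot> (twobar \<cdot> TZero) \<cdot> A)"
proof -
  have twists: "Frac (TOne \<cdot> TZero \<cdot> rho_x A \<cdot> TZero \<cdot> TOneBar) = Frac A"
    "Frac (TOneBar \<cdot> TZero \<cdot> rho_x A \<cdot> TZero \<cdot> TOne) = Frac A"
    by (simp_all only: Frac_twist Frac_rho) simp_all
  have flypes: "Frac (mirror A \<cdot> TZero \<cdot> TOne \<cdot> TOneBar \<cdot> TOne \<cdot> TZero) = Frac A"
    "Frac (mirror A \<cdot> TZero \<cdot> TOneBar \<cdot> TOne \<cdot> TOneBar \<cdot> TZero) = Frac A"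
    "Frac (mirror A \<cdot> TOneBar \<cdot> TOne \<cdot> TOneBar) = Frac A"
    "Frac (mirror A \<cdot> TOne \<cdot> TOneBar \<cdot> TOne) = Frac A"
    by (simp_all only: Frac_TProd_TZero Frac_flype Frac_flype_bar Frac_mirror
        qrecip_qneg qneg_qneg qrecip_qrecip)
  have ring_move: "Frac (A \<cdot> TZero \<cdot> (two \<cdot> (twobar \<cdot> TZero) \<cdot> TZero)) = None"
    "Frac (two \<cdot> (twobar \<cdot> TZero) \<cdot> A) = None"
    by (intro Frac_TProd_infinite_right Frac_TProd_zero_left Frac_ring)+
  show ?thesis
    using twists flypes ring_move by simp
qed

end
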